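(* Let $n\ge 2$, $p\in(0,1)$, and let $Y,\mu,\sigma^2,\gamma_s$ be as follows: $Y$ is the number of isolated vertices of the Erdős–Rényi random graph on $n$ vertices with edge probability $p$, $\mu=E Y$, $\sigma^2=\mathrm{Var}(Y)$, and $\gamma_s=e^s(pe^s+1-p)^{n-2}(npe^s+1-p)+(n-1)p+1$. Then for every $\theta_0\ge 0$, $$P\Big(\frac{Y-\mu}{\sigma}\ge t\Big)\le\begin{cases}\exp\Big(-\dfrac{t^2\sigma^2}{\mu\,\gamma_{\theta_0/\sigma}}\Big), & t\in\big[0,\ \theta_0\mu\gamma_{\theta_0/\sigma}/(2\sigma^2)\big],\\[2mm] \exp\Big(-\theta_0t+\dfrac{\mu\gamma_{\theta_0/\sigma}\theta_0^2}{4\sigma^2}\Big), & t>\theta_0\mu\gamma_{\theta_0/\sigma}/(2\sigma^2).\end{cases}$$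
   Context: The Erdős–Rényi random graph on $\{1,\ldots,n\}$ with edge probability $p$ has independent Bernoulli($p$) edge indicators for all unordered pairs of distinct vertices. An isolated vertex is a vertex of degree $0$. Here $\mu=n(1-p)^{n-1}$ and $\sigma^2=n(1-p)^{n-1}(1+np(1-p)^{n-2}-(1-p)^{n-2})$. *)

theory Defs
  imports "HOL-Probability.Probability"
begin

definition vpairs :: "nat \<Rightarrow> nat set set" where
  "vpairs n = {{i, j} | i j. i \<in> {1..n} \<and> j \<in> {1..n} \<and> i < j}"

text \<open>Erdos-Renyi random graph G(n,p): independent Bernoulli(p) indicator for every
  potential edge; a graph is its edge-indicator function (False outside vpairs n).\<close>
definition ER_graph :: "nat \<Rightarrow> real \<Rightarrow> (nat set \<Rightarrow> bool) pmf" where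
  "ER_graph n p = Pi_pmf (vpairs n) False (\<lambda>_. bernoulli_pmf p)"

definition isolated_count :: "nat \<Rightarrow> (nat set \<Rightarrow> bool) \<Rightarrow> nat" where
  "isolated_count n G = card {v \<in> {1..n}. \<forall>u \<in> {1..n}. u \<noteq> v \<longrightarrow> \<not> G {u, v}}"

definition iso_mean :: "nat \<Rightarrow> real \<Rightarrow> real" where
  "iso_mean n p = measure_pmf.expectation (ER_graph n p) (\<lambda>G. real (isolated_count n G))"

definition iso_var :: "nat \<Rightarrow> real \<Rightarrow> real" where
  "iso_var n p = measure_pmf.variance (ER_graph n p) (\<lambda>G. real (isolated_count n G))"

definition gamma_iso :: "nat \<Rightarrow> real \<Rightarrow> real \<Rightarrow> real" where
  "gamma_iso n p s = exp s * (p * exp s + 1 - p) ^ (n - 2) * (real n * p * exp s + 1 - p)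
                     + (real n - 1) * p + 1"

end

theory Submission
  imports Defs
begin

(*
  A graph is identified with its edge set E \<subseteq> vpairs n, so expectations over G(n,p)
  are finite sums weighted by product Bernoulli weights.  With M(s) = E exp(sY) and
  \<mu> = E Y = n(1-p)^(n-1):
  (1) size bias: E[Y h(E)] = \<Sum>_v (1-p)^(n-1) E[h(E - star v)], because v is isolated
      exactly when E avoids the star of v, independently of the other edges;
  (2) deleting the star of v raises Y by at most 1 + |E \<inter> star v|; together with
      e^x - 1 \<le> x(e^x + 1)/2 and Harris' inequality this gives
      M'(s) \<le> \<mu> (1 + s \<gamma>_s / 2) M(s), \<gamma>_s being an explicit moment over a star;
  (3) integrating (ln M)' yields M(s) \<le> exp(s\<mu> + \<mu> \<gamma>_{s0} s^2/4) for 0 \<le> s \<le> s0;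
  (4) Markov's inequality for exp(sY) and the best s \<in> [0, \<theta>\<^sub>0/\<sigma>] give the two regimes.
*)

section \<open>Product Bernoulli weights on subsets of a finite set\<close>

definition bern_weight :: "real \<Rightarrow> 'a set \<Rightarrow> 'a set \<Rightarrow> real" where
  "bern_weight p P E = (\<Prod>e\<in>P. if e \<in> E then p else 1 - p)"

lemma sum_Pow_insert:
  assumes "finite P" "a \<notin> P"
  shows "(\<Sum>E\<in>Pow (insert a P). H E) = (\<Sum>E\<in>Pow P. H E + H (insert a E))"
proof -
  have disjoint: "Pow P \<inter> insert a ` Pow P = {}" using assms by auto
  have inj: "inj_on (insert a) (Pow P)"
    using assms unfolding inj_on_def by (metis Pow_iff in_mono insert_ident)
  have "(\<Sum>E\<in>Pow (insert a P). H E) = (\<Sum>E\<in>Pow P. H E) + (\<Sum>E\<in>insert a ` Pow P. H E)"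
    unfolding Pow_insert using assms disjoint by (intro sum.union_disjoint) auto
  also have "(\<Sum>E\<in>insert a ` Pow P. H E) = (\<Sum>E\<in>Pow P. H (insert a E))"
    using sum.reindex[OF inj] by simp
  finally show ?thesis by (simp add: sum.distrib)
qed

lemma bern_weight_insert_absent:
  assumes "finite P" "a \<notin> P" "E \<subseteq> P"
  shows "bern_weight p (insert a P) E = (1 - p) * bern_weight p P E"
  using assms unfolding bern_weight_def by (subst prod.insert) auto

lemma bern_weight_insert_present:
  assumes "finite P" "a \<notin> P" "E \<subseteq> P"
  shows "bern_weight p (insert a P) (insert a E) = p * bern_weight p P E"
proof -
  have "bern_weight p (insert a P) (insert a E)
      = p * (\<Prod>e\<in>P. if e \<in> insert a E then p else 1 - p)"
    using assms unfolding bern_weight_def by (subst prod.insert) auto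
  also have "(\<Prod>e\<in>P. if e \<in> insert a E then p else 1 - p) = bern_weight p P E"
    unfolding bern_weight_def using assms by (intro prod.cong) auto
  finally show ?thesis .
qed

lemmas bern_weight_insert = bern_weight_insert_absent bern_weight_insert_present

lemma bern_weight_nonneg: "0 \<le> p \<Longrightarrow> p \<le> 1 \<Longrightarrow> 0 \<le> bern_weight p P E"
  unfolding bern_weight_def by (intro prod_nonneg) auto

lemma sum_bern_weight: "finite P \<Longrightarrow> (\<Sum>E\<in>Pow P. bern_weight p P E) = 1"
proof (induction P rule: finite_induct)
  case empty
  then show ?case by (simp add: bern_weight_def)
next
  case (insert a P)
  have "(\<Sum>E\<in>Pow (insert a P). bern_weight p (insert a P) E)
      = (\<Sum>E\<in>Pow P. (1 - p) * bern_weight p P E + p * bern_weight p P E)"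
    using insert by (subst sum_Pow_insert) (auto intro!: sum.cong simp: bern_weight_insert)
  also have "\<dots> = (\<Sum>E\<in>Pow P. bern_weight p P E)" by (simp add: algebra_simps)
  finally show ?case using insert by simp
qed

lemma sum_bern_weight_exp_card:
  "finite P \<Longrightarrow> (\<Sum>E\<in>Pow P. bern_weight p P E * exp (t * real (card E)))
     = (p * exp t + 1 - p) ^ card P"
proof (induction P rule: finite_induct)
  case empty
  then show ?case by (simp add: bern_weight_def)
next
  case (insert a P)
  define A where "A = (\<Sum>E\<in>Pow P. bern_weight p P E * exp (t * real (card E)))"
  have card_insert: "card (insert a E) = Suc (card E)" if "E \<subseteq> P" for E
    using insert that by (meson card_insert_disjoint finite_subset subsetD)
  have "(\<Sum>E\<in>Pow (insert a P). bern_weight p (insert a P) E * exp (t * real (card E)))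
      = (\<Sum>E\<in>Pow P. (1 - p + p * exp t) * (bern_weight p P E * exp (t * real (card E))))"
    using insert card_insert
    by (subst sum_Pow_insert) (auto intro!: sum.cong simp: bern_weight_insert algebra_simps exp_add)
  also have "\<dots> = (p * exp t + 1 - p) * A"
    unfolding A_def by (simp add: sum_distrib_left algebra_simps)
  finally show ?case using insert by (simp add: A_def)
qed

text \<open>The size-biased moment E[|E| exp(t|E|)], obtained by differentiating the
  moment generating function.\<close>
lemma sum_bern_weight_card_exp_card:
  assumes "finite P" "card P = Suc k"
  shows "(\<Sum>E\<in>Pow P. bern_weight p P E * (real (card E) * exp (t * real (card E))))
         = real (card P) * (p * exp t) * (p * exp t + 1 - p) ^ k"
proof -
  have lhs: "((\<lambda>t. \<Sum>E\<in>Pow P. bern_weight p P E * exp (t * real (card E))) has_real_derivative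
        (\<Sum>E\<in>Pow P. bern_weight p P E * (real (card E) * exp (t * real (card E))))) (at t)"
    by (rule DERIV_sum) (rule derivative_eq_intros refl | simp)+
  have rhs: "((\<lambda>t. (p * exp t + 1 - p) ^ card P) has_real_derivative
        real (card P) * (p * exp t) * (p * exp t + 1 - p) ^ k) (at t)"
    unfolding assms(2) by (rule derivative_eq_intros refl | simp)+
  show ?thesis
    using DERIV_unique[OF lhs] rhs sum_bern_weight_exp_card[OF assms(1)] by simp
qed

text \<open>Harris inequality: on the product measure, an increasing and a decreasing
  function are negatively correlated.  Proved by induction on P, conditioning on
  the last coordinate.\<close>
lemma harris_inequality:
  assumes "finite P" "0 \<le> p" "p \<le> 1"
    and "\<And>E E'. E \<subseteq> E' \<Longrightarrow> E' \<subseteq> P \<Longrightarrow> F E \<le> F E'"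
    and "\<And>E E'. E \<subseteq> E' \<Longrightarrow> E' \<subseteq> P \<Longrightarrow> G E' \<le> G E"
  shows "(\<Sum>E\<in>Pow P. bern_weight p P E * F E * G E)
         \<le> (\<Sum>E\<in>Pow P. bern_weight p P E * F E) * (\<Sum>E\<in>Pow P. bern_weight p P E * G E)"
  using assms(1,4,5)
proof (induction P arbitrary: F G rule: finite_induct)
  case empty
  then show ?case by (simp add: bern_weight_def)
next
  case (insert a P)
  let ?w = "bern_weight p P"
  define F' where "F' E = (1 - p) * F E + p * F (insert a E)" for E
  define G' where "G' E = (1 - p) * G E + p * G (insert a E)" for E
  have FG: "(\<Sum>E\<in>Pow (insert a P). bern_weight p (insert a P) E * F E * G E)
      = (\<Sum>E\<in>Pow P. ?w E * ((1 - p) * F E * G E + p * F (insert a E) * G (insert a E)))"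
    using insert(1,2)
    by (subst sum_Pow_insert) (auto intro!: sum.cong simp: bern_weight_insert algebra_simps)
  have F: "(\<Sum>E\<in>Pow (insert a P). bern_weight p (insert a P) E * F E) = (\<Sum>E\<in>Pow P. ?w E * F' E)"
    using insert(1,2)
    by (subst sum_Pow_insert) (auto intro!: sum.cong simp: bern_weight_insert algebra_simps F'_def)
  have G: "(\<Sum>E\<in>Pow (insert a P). bern_weight p (insert a P) E * G E) = (\<Sum>E\<in>Pow P. ?w E * G' E)"
    using insert(1,2)
    by (subst sum_Pow_insert) (auto intro!: sum.cong simp: bern_weight_insert algebra_simps G'_def)
  text \<open>Conditionally on the other coordinates, the claim is the one-coordinate
    Chebyshev inequality.\<close>
  have one_coordinate: "?w E * ((1 - p) * F E * G E + p * F (insert a E) * G (insert a E))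
      \<le> ?w E * F' E * G' E" if "E \<in> Pow P" for E
  proof -
    have "F E \<le> F (insert a E)" "G (insert a E) \<le> G E"
      using that by (auto intro: insert.prems)
    then have "0 \<le> p * (1 - p) * ((F (insert a E) - F E) * (G E - G (insert a E)))"
      using assms(2,3) by (intro mult_nonneg_nonneg) auto
    also have "\<dots> = F' E * G' E - ((1 - p) * F E * G E + p * F (insert a E) * G (insert a E))"
      unfolding F'_def G'_def by (simp add: algebra_simps)
    finally show ?thesis
      using mult_left_mono bern_weight_nonneg[OF assms(2,3)] by (fastforce simp: mult.assoc)
  qed
  have IH: "(\<Sum>E\<in>Pow P. ?w E * F' E * G' E) \<le> (\<Sum>E\<in>Pow P. ?w E * F' E) * (\<Sum>E\<in>Pow P. ?w E * G' E)"
  proof (rule insert.IH)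
    fix E E' assume "E \<subseteq> E'" "E' \<subseteq> P"
    then have "F E \<le> F E'" "F (insert a E) \<le> F (insert a E')" by (auto intro!: insert.prems(1))
    then show "F' E \<le> F' E'"
      unfolding F'_def using assms(2,3) by (intro add_mono mult_left_mono) auto
  next
    fix E E' assume "E \<subseteq> E'" "E' \<subseteq> P"
    then have "G E' \<le> G E" "G (insert a E') \<le> G (insert a E)" by (auto intro!: insert.prems(2))
    then show "G' E' \<le> G' E"
      unfolding G'_def using assms(2,3) by (intro add_mono mult_left_mono) auto
  qed
  have "(\<Sum>E\<in>Pow P. ?w E * ((1 - p) * F E * G E + p * F (insert a E) * G (insert a E)))
      \<le> (\<Sum>E\<in>Pow P. ?w E * F' E * G' E)"
    by (rule sum_mono[OF one_coordinate])
  then show ?case unfolding FG F G using IH by linarith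
qed

lemma sum_Pow_split:
  assumes "finite P" "S \<subseteq> P"
  shows "(\<Sum>E\<in>Pow P. H E) = (\<Sum>A\<in>Pow (P - S). \<Sum>B\<in>Pow S. H (A \<union> B))"
proof -
  have bij: "bij_betw (\<lambda>(A, B). A \<union> B) (Pow (P - S) \<times> Pow S) (Pow P)"
    by (rule bij_betw_byWitness[where f' = "\<lambda>E. (E - S, E \<inter> S)"]) (use assms in auto)
  have "(\<Sum>E\<in>Pow P. H E) = (\<Sum>x\<in>Pow (P - S) \<times> Pow S. H ((\<lambda>(A, B). A \<union> B) x))"
    using sum.reindex_bij_betw[OF bij, of H] by simp
  also have "\<dots> = (\<Sum>A\<in>Pow (P - S). \<Sum>B\<in>Pow S. H (A \<union> B))"
    by (subst sum.cartesian_product) (simp add: case_prod_beta)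
  finally show ?thesis .
qed

lemma bern_weight_split:
  assumes "finite P" "S \<subseteq> P" "A \<subseteq> P - S" "B \<subseteq> S"
  shows "bern_weight p P (A \<union> B) = bern_weight p (P - S) A * bern_weight p S B"
proof -
  have "bern_weight p P (A \<union> B) = (\<Prod>e\<in>(P - S) \<union> S. if e \<in> A \<union> B then p else 1 - p)"
    unfolding bern_weight_def using assms(2) by (simp add: Un_absorb2)
  also have "\<dots> = (\<Prod>e\<in>P - S. if e \<in> A \<union> B then p else 1 - p) * (\<Prod>e\<in>S. if e \<in> A \<union> B then p else 1 - p)"
    using assms by (intro prod.union_disjoint) (auto intro: finite_subset)
  also have "(\<Prod>e\<in>P - S. if e \<in> A \<union> B then p else 1 - p) = bern_weight p (P - S) A"
    unfolding bern_weight_def using assms by (intro prod.cong) auto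
  also have "(\<Prod>e\<in>S. if e \<in> A \<union> B then p else 1 - p) = bern_weight p S B"
    unfolding bern_weight_def using assms by (intro prod.cong) auto
  finally show ?thesis .
qed

lemma bern_weight_empty: "bern_weight p S {} = (1 - p) ^ card S"
  by (simp add: bern_weight_def)

lemma sum_bern_weight_avoiding:
  assumes "finite P" "S \<subseteq> P"
  shows "(\<Sum>E\<in>Pow P. bern_weight p P E * (if E \<inter> S = {} then h E else 0))
       = (1 - p) ^ card S * (\<Sum>E\<in>Pow P. bern_weight p P E * h (E - S))"
proof -
  have finite_S: "finite S" using assms finite_subset by blast
  let ?w = "bern_weight p (P - S)" and ?v = "bern_weight p S"
  have "(\<Sum>E\<in>Pow P. bern_weight p P E * (if E \<inter> S = {} then h E else 0))
      = (\<Sum>A\<in>Pow (P - S). \<Sum>B\<in>Pow S. if B = {} then ?w A * ?v B * h A else 0)"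
  proof (subst sum_Pow_split[OF assms], intro sum.cong refl)
    fix A B assume A: "A \<in> Pow (P - S)" and B: "B \<in> Pow S"
    then have "(A \<union> B) \<inter> S = {} \<longleftrightarrow> B = {}" by auto
    then show "bern_weight p P (A \<union> B) * (if (A \<union> B) \<inter> S = {} then h (A \<union> B) else 0)
        = (if B = {} then ?w A * ?v B * h A else 0)"
      using bern_weight_split[OF assms] A B by auto
  qed
  also have "\<dots> = (\<Sum>A\<in>Pow (P - S). ?w A * h A) * (1 - p) ^ card S"
  proof -
    have "(\<Sum>B\<in>Pow S. if B = {} then ?w A * ?v B * h A else 0) = ?w A * h A * (1 - p) ^ card S"
      for A using finite_S by (subst sum.delta) (auto simp: bern_weight_empty)
    then show ?thesis by (simp add: sum_distrib_right)
  qed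
  also have "(\<Sum>A\<in>Pow (P - S). ?w A * h A)
      = (\<Sum>A\<in>Pow (P - S). \<Sum>B\<in>Pow S. ?w A * h A * ?v B)"
    using sum_bern_weight[OF finite_S] by (simp add: sum_distrib_left[symmetric])
  also have "\<dots> = (\<Sum>E\<in>Pow P. bern_weight p P E * h (E - S))"
  proof (subst sum_Pow_split[OF assms], intro sum.cong refl)
    fix A B assume A: "A \<in> Pow (P - S)" and B: "B \<in> Pow S"
    then have "A \<union> B - S = A" by auto
    then show "?w A * h A * ?v B = bern_weight p P (A \<union> B) * h (A \<union> B - S)"
      using bern_weight_split[OF assms] A B by simp
  qed
  finally show ?thesis by simp
qed

lemma sum_bern_weight_restrict:
  assumes "finite P" "S \<subseteq> P"
  shows "(\<Sum>E\<in>Pow P. bern_weight p P E * f (E \<inter> S)) = (\<Sum>B\<in>Pow S. bern_weight p S B * f B)"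
proof -
  have "(\<Sum>E\<in>Pow P. bern_weight p P E * f (E \<inter> S))
      = (\<Sum>A\<in>Pow (P - S). \<Sum>B\<in>Pow S. bern_weight p (P - S) A * (bern_weight p S B * f B))"
  proof (subst sum_Pow_split[OF assms], intro sum.cong refl)
    fix A B assume A: "A \<in> Pow (P - S)" and B: "B \<in> Pow S"
    then have "(A \<union> B) \<inter> S = B" by auto
    then show "bern_weight p P (A \<union> B) * f ((A \<union> B) \<inter> S)
        = bern_weight p (P - S) A * (bern_weight p S B * f B)"
      using bern_weight_split[OF assms] A B by simp
  qed
  also have "\<dots> = (\<Sum>A\<in>Pow (P - S). bern_weight p (P - S) A) * (\<Sum>B\<in>Pow S. bern_weight p S B * f B)"
    by (simp add: sum_product)
  finally show ?thesis using sum_bern_weight[of "P - S"] assms(1) by simp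
qed

text \<open>The constant \<gamma>_s of the theorem is the moment E[(1 + |B|)(exp(s(1 + |B|)) + 1)] of a
  binomial subset B of a set of size n - 1 (in the application: the star of a vertex).\<close>
lemma gamma_iso_eq_star_moment:
  assumes "finite K" "card K = n - 1" "n \<ge> 2"
  shows "(\<Sum>B\<in>Pow K. bern_weight p K B * ((1 + real (card B)) * (exp (s * (1 + real (card B))) + 1)))
         = gamma_iso n p s"
proof -
  define q where "q = p * exp s + 1 - p"
  have card_K: "card K = Suc (n - 2)" using assms(2,3) by simp
  have expand: "(1 + c) * (exp (s * (1 + c)) + 1)
      = exp s * exp (s * c) + exp s * (c * exp (s * c)) + 1 + c * exp (0 * c)" for c :: real
    by (simp add: algebra_simps exp_add)
  have "(\<Sum>B\<in>Pow K. bern_weight p K B * ((1 + real (card B)) * (exp (s * (1 + real (card B))) + 1)))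
      = exp s * (\<Sum>B\<in>Pow K. bern_weight p K B * exp (s * real (card B)))
        + exp s * (\<Sum>B\<in>Pow K. bern_weight p K B * (real (card B) * exp (s * real (card B))))
        + (\<Sum>B\<in>Pow K. bern_weight p K B)
        + (\<Sum>B\<in>Pow K. bern_weight p K B * (real (card B) * exp (0 * real (card B))))"
    unfolding expand by (simp add: sum.distrib sum_distrib_left algebra_simps)
  also have "\<dots> = exp s * q ^ Suc (n - 2) + exp s * ((real n - 1) * (p * exp s) * q ^ (n - 2))
                  + 1 + (real n - 1) * p"
    using sum_bern_weight_card_exp_card[OF assms(1) card_K, of p s]
      sum_bern_weight_card_exp_card[OF assms(1) card_K, of p 0]
      sum_bern_weight_exp_card[OF assms(1), of p s] sum_bern_weight[OF assms(1), of p]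
      assms(2,3) card_K by (simp add: q_def of_nat_diff)
  also have "\<dots> = gamma_iso n p s"
    unfolding gamma_iso_def q_def by (simp add: algebra_simps)
  finally show ?thesis .
qed

text \<open>Positivity of \<gamma>_s makes the exponent of the Chernoff bound a genuine quadratic.\<close>
lemma gamma_iso_pos:
  assumes "0 \<le> p" "p \<le> 1" "n \<ge> 1"
  shows "0 < gamma_iso n p s"
proof -
  have "0 \<le> p * exp s" "0 \<le> real n * p * exp s" using assms by simp_all
  then have "0 \<le> p * exp s + 1 - p" "0 \<le> real n * p * exp s + 1 - p" using assms by linarith+
  then show ?thesis unfolding gamma_iso_def using assms
    by (intro add_nonneg_pos add_nonneg_nonneg mult_nonneg_nonneg) auto
qed

text \<open>\<gamma>_s is nondecreasing in s, so \<gamma>_{s0} dominates \<gamma>_s on [0, s0] in Herbst's argument.\<close>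
lemma gamma_iso_mono:
  assumes "0 \<le> p" "p \<le> 1" "s \<le> s'"
  shows "gamma_iso n p s \<le> gamma_iso n p s'"
proof -
  have e: "exp s \<le> exp s'" using assms by simp
  have "0 \<le> p * exp s" "0 \<le> real n * p * exp s" using assms by simp_all
  then have "0 \<le> p * exp s + 1 - p" "0 \<le> real n * p * exp s + 1 - p" using assms by linarith+
  moreover have "p * exp s + 1 - p \<le> p * exp s' + 1 - p"
    "real n * p * exp s + 1 - p \<le> real n * p * exp s' + 1 - p"
    using e assms by (auto intro: mult_left_mono)
  ultimately show ?thesis unfolding gamma_iso_def using e
    by (intro add_right_mono mult_mono power_mono) auto
qed

section \<open>The Erdos-Renyi graph as a weighted sum over edge sets\<close>

lemma finite_vpairs: "finite (vpairs n)"
proof -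
  have "vpairs n \<subseteq> Pow {1..n}" unfolding vpairs_def by auto
  then show ?thesis by (rule finite_subset) simp
qed

lemma expectation_ER_graph:
  fixes f :: "(nat set \<Rightarrow> bool) \<Rightarrow> real"
  assumes "0 \<le> p" "p \<le> 1"
  shows "measure_pmf.expectation (ER_graph n p) f
         = (\<Sum>E\<in>Pow (vpairs n). bern_weight p (vpairs n) E * f (\<lambda>e. e \<in> E))"
proof -
  let ?P = "vpairs n"
  define graph where "graph E = (\<lambda>e. e \<in> E)" for E :: "nat set set"
  have inj: "inj_on graph (Pow ?P)" unfolding inj_on_def graph_def by (auto simp: fun_eq_iff)
  have "measure_pmf.expectation (ER_graph n p) f = (\<Sum>G\<in>graph ` Pow ?P. pmf (ER_graph n p) G *\<^sub>R f G)"
  proof (rule integral_measure_pmf)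
    show "finite (graph ` Pow ?P)" using finite_vpairs by simp
  next
    fix G assume "G \<in> set_pmf (ER_graph n p)"
    then have "\<forall>x. x \<notin> ?P \<longrightarrow> \<not> G x"
      unfolding ER_graph_def using pmf_Pi_outside[OF finite_vpairs[of n], of G False]
      by (auto simp: set_pmf_iff)
    then have "G = graph {e \<in> ?P. G e}" unfolding graph_def by (auto simp: fun_eq_iff)
    then show "G \<in> graph ` Pow ?P" by blast
  qed
  also have "\<dots> = (\<Sum>E\<in>Pow ?P. pmf (ER_graph n p) (graph E) * f (graph E))"
    by (simp add: sum.reindex[OF inj])
  also have "\<dots> = (\<Sum>E\<in>Pow ?P. bern_weight p ?P E * f (graph E))"
  proof (intro sum.cong refl)
    fix E assume E: "E \<in> Pow ?P"
    have "pmf (ER_graph n p) (graph E) = (\<Prod>e\<in>?P. pmf (bernoulli_pmf p) (graph E e))"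
      unfolding ER_graph_def using E by (intro pmf_Pi'[OF finite_vpairs]) (auto simp: graph_def)
    also have "\<dots> = bern_weight p ?P E"
      unfolding bern_weight_def graph_def using assms by (intro prod.cong) auto
    finally show "pmf (ER_graph n p) (graph E) * f (graph E) = bern_weight p ?P E * f (graph E)"
      by simp
  qed
  finally show ?thesis unfolding graph_def .
qed

section \<open>Isolated vertices and stars\<close>

definition isolated_vertices :: "nat \<Rightarrow> nat set set \<Rightarrow> nat set" where
  "isolated_vertices n E = {v \<in> {1..n}. \<forall>u \<in> {1..n}. u \<noteq> v \<longrightarrow> {u, v} \<notin> E}"

definition star :: "nat \<Rightarrow> nat \<Rightarrow> nat set set" where
  "star n v = {e \<in> vpairs n. v \<in> e}"

lemma isolated_count_graph: "isolated_count n (\<lambda>e. e \<in> E) = card (isolated_vertices n E)"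
  unfolding isolated_count_def isolated_vertices_def by simp

lemma doubleton_in_vpairs:
  assumes "u \<in> {1..n}" "v \<in> {1..n}" "u \<noteq> v"
  shows "{u, v} \<in> vpairs n"
proof (cases "u < v")
  case True
  then show ?thesis unfolding vpairs_def using assms by blast
next
  case False
  then have "v < u" "{u, v} = {v, u}" using assms(3) by (auto simp: insert_commute)
  then show ?thesis unfolding vpairs_def using assms by blast
qed

lemma vpairs_member_at:
  "e \<in> vpairs n \<Longrightarrow> v \<in> e \<Longrightarrow> \<exists>u \<in> {1..n}. u \<noteq> v \<and> e = {u, v}"
  unfolding vpairs_def by auto

lemma star_subset: "star n v \<subseteq> vpairs n"
  unfolding star_def by auto

lemma finite_star: "finite (star n v)"
  using finite_subset[OF star_subset finite_vpairs] .

lemma card_star: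
  assumes "v \<in> {1..n}"
  shows "card (star n v) = n - 1"
proof -
  have "star n v = (\<lambda>u. {u, v}) ` ({1..n} - {v})"
  proof
    show "star n v \<subseteq> (\<lambda>u. {u, v}) ` ({1..n} - {v})"
      unfolding star_def using vpairs_member_at by fastforce
    show "(\<lambda>u. {u, v}) ` ({1..n} - {v}) \<subseteq> star n v"
      unfolding star_def using doubleton_in_vpairs assms by auto
  qed
  moreover have "inj_on (\<lambda>u. {u, v}) ({1..n} - {v})"
    unfolding inj_on_def by (auto simp: doubleton_eq_iff)
  ultimately show ?thesis using assms by (simp add: card_image)
qed

lemma isolated_iff_avoids_star:
  assumes "v \<in> {1..n}" "E \<subseteq> vpairs n"
  shows "v \<in> isolated_vertices n E \<longleftrightarrow> E \<inter> star n v = {}"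
proof
  assume isolated: "v \<in> isolated_vertices n E"
  show "E \<inter> star n v = {}"
  proof (rule ccontr)
    assume "E \<inter> star n v \<noteq> {}"
    then obtain e where e: "e \<in> E" "e \<in> vpairs n" "v \<in> e" unfolding star_def by auto
    from vpairs_member_at[OF e(2,3)] obtain u where "u \<in> {1..n}" "u \<noteq> v" "e = {u, v}" by blast
    then show False using isolated e(1) unfolding isolated_vertices_def by auto
  qed
next
  assume avoid: "E \<inter> star n v = {}"
  have "{u, v} \<in> star n v" if "u \<in> {1..n}" "u \<noteq> v" for u
    unfolding star_def using doubleton_in_vpairs[OF that(1) assms(1) that(2)] by simp
  then show "v \<in> isolated_vertices n E"
    unfolding isolated_vertices_def using avoid assms(1) by blast
qed

lemma card_isolated_antimono: "E \<subseteq> E' \<Longrightarrow> card (isolated_vertices n E') \<le> card (isolated_vertices n E)"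
  by (rule card_mono) (auto simp: isolated_vertices_def)

text \<open>Deleting the star of v can only make v and its neighbours isolated.\<close>
lemma card_isolated_delete_star:
  assumes "v \<in> {1..n}" "E \<subseteq> vpairs n"
  shows "card (isolated_vertices n (E - star n v))
         \<le> card (isolated_vertices n E) + 1 + card (E \<inter> star n v)"
proof -
  define N where "N = {u \<in> {1..n}. u \<noteq> v \<and> {u, v} \<in> E}"
  have "isolated_vertices n (E - star n v) \<subseteq> isolated_vertices n E \<union> {v} \<union> N"
  proof
    fix w assume w: "w \<in> isolated_vertices n (E - star n v)"
    show "w \<in> isolated_vertices n E \<union> {v} \<union> N"
    proof (rule ccontr)
      assume not_new: "w \<notin> isolated_vertices n E \<union> {v} \<union> N"
      have "w \<in> {1..n}" using w unfolding isolated_vertices_def by auto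
      then obtain u where u: "u \<in> {1..n}" "u \<noteq> w" "{u, w} \<in> E"
        using not_new unfolding isolated_vertices_def by auto
      then have "{u, w} \<in> star n v" using w unfolding isolated_vertices_def by auto
      then have "v = u \<or> v = w" unfolding star_def by auto
      then show False using not_new u \<open>w \<in> {1..n}\<close> unfolding N_def by (auto simp: insert_commute)
    qed
  qed
  then have "card (isolated_vertices n (E - star n v)) \<le> card (isolated_vertices n E \<union> {v} \<union> N)"
    by (intro card_mono) (auto simp: isolated_vertices_def N_def)
  also have "\<dots> \<le> card (isolated_vertices n E \<union> {v}) + card N" by (rule card_Un_le)
  also have "card (isolated_vertices n E \<union> {v}) \<le> card (isolated_vertices n E) + 1"
    using card_Un_le[of _ "{v}"] by simp
  also have "card N \<le> card (E \<inter> star n v)"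
  proof (rule card_inj_on_le[where f = "\<lambda>u. {u, v}"])
    show "inj_on (\<lambda>u. {u, v}) N" unfolding inj_on_def N_def by (auto simp: doubleton_eq_iff)
    show "(\<lambda>u. {u, v}) ` N \<subseteq> E \<inter> star n v" unfolding N_def star_def using assms(2) by auto
    show "finite (E \<inter> star n v)" using finite_star by blast
  qed
  finally show ?thesis by simp
qed

text \<open>Size-bias identity: E[Y h] = \<Sum>_v (1-p)^(n-1) E[h(E - star v)], where Y counts
  isolated vertices.  It expresses Y as the sum of the indicators of avoiding the stars.\<close>
lemma isolated_size_bias:
  "(\<Sum>E\<in>Pow (vpairs n). bern_weight p (vpairs n) E * (real (card (isolated_vertices n E)) * h E))
   = (\<Sum>v\<in>{1..n}. (1 - p) ^ (n - 1)
        * (\<Sum>E\<in>Pow (vpairs n). bern_weight p (vpairs n) E * h (E - star n v)))"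
proof -
  let ?w = "bern_weight p (vpairs n)"
  have "(\<Sum>E\<in>Pow (vpairs n). ?w E * (real (card (isolated_vertices n E)) * h E))
     = (\<Sum>E\<in>Pow (vpairs n). \<Sum>v\<in>{1..n}. ?w E * (if E \<inter> star n v = {} then h E else 0))"
  proof (rule sum.cong[OF refl])
    fix E assume "E \<in> Pow (vpairs n)"
    then have "isolated_vertices n E = {v \<in> {1..n}. E \<inter> star n v = {}}"
      using isolated_iff_avoids_star[of _ n E] by (auto simp: isolated_vertices_def)
    moreover have "(\<Sum>v\<in>{1..n}. if E \<inter> star n v = {} then 1 else 0)
        = (\<Sum>v\<in>{v \<in> {1..n}. E \<inter> star n v = {}}. (1::real))"
      by (rule sum.inter_filter[symmetric]) simp
    ultimately have "real (card (isolated_vertices n E))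
        = (\<Sum>v\<in>{1..n}. if E \<inter> star n v = {} then 1 else 0)"
      by simp
    then show "?w E * (real (card (isolated_vertices n E)) * h E)
        = (\<Sum>v\<in>{1..n}. ?w E * (if E \<inter> star n v = {} then h E else 0))"
      by (auto simp: sum_distrib_left sum_distrib_right intro!: sum.cong)
  qed
  also have "\<dots> = (\<Sum>v\<in>{1..n}. \<Sum>E\<in>Pow (vpairs n). ?w E * (if E \<inter> star n v = {} then h E else 0))"
    by (rule sum.swap)
  also have "\<dots> = (\<Sum>v\<in>{1..n}. (1 - p) ^ (n - 1) * (\<Sum>E\<in>Pow (vpairs n). ?w E * h (E - star n v)))"
    using sum_bern_weight_avoiding[OF finite_vpairs star_subset] card_star
    by (intro sum.cong) auto
  finally show ?thesis .
qed

lemma iso_mean_eq: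
  assumes "0 \<le> p" "p \<le> 1"
  shows "iso_mean n p = real n * (1 - p) ^ (n - 1)"
  using isolated_size_bias[of p n "\<lambda>_. 1"] sum_bern_weight[OF finite_vpairs]
  unfolding iso_mean_def expectation_ER_graph[OF assms] isolated_count_graph by simp

lemma exp_minus_one_le:
  assumes "0 \<le> (x::real)"
  shows "exp x - 1 \<le> x * (exp x + 1) / 2"
proof -
  define \<phi> where "\<phi> y = y * (exp y + 1) / 2 - exp y + 1" for y :: real
  have "\<phi> 0 \<le> \<phi> x"
  proof (rule DERIV_nonneg_imp_nondecreasing[OF assms])
    fix y :: real
    have deriv: "(\<phi> has_real_derivative (1 - (exp y - y * exp y)) / 2) (at y)"
      unfolding \<phi>_def by (auto intro!: derivative_eq_intros simp: field_simps)
    have "exp y * (1 - y) \<le> exp y * exp (- y)"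
      using exp_ge_add_one_self[of "- y"] by (intro mult_left_mono) auto
    then have "0 \<le> (1 - (exp y - y * exp y)) / 2" by (simp add: exp_minus algebra_simps)
    then show "\<exists>D. (\<phi> has_real_derivative D) (at y) \<and> 0 \<le> D" using deriv by blast
  qed
  then show ?thesis unfolding \<phi>_def by simp
qed

lemma exp_increment_bound:
  fixes s Y Y' d :: real
  assumes s: "0 \<le> s" and "Y \<le> Y'" "Y' \<le> Y + 1 + d"
  shows "exp (s * Y') - exp (s * Y) \<le> exp (s * Y) * (s / 2 * ((1 + d) * (exp (s * (1 + d)) + 1)))"
proof -
  have "s * (Y' - Y) \<le> s * (1 + d)" using assms by (intro mult_left_mono) auto
  then have "exp (s * (Y' - Y)) \<le> exp (s * (1 + d))" by simp
  moreover have "exp (s * Y') = exp (s * Y) * exp (s * (Y' - Y))"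
    by (simp add: exp_add[symmetric] algebra_simps)
  ultimately have "exp (s * Y') - exp (s * Y) \<le> exp (s * Y) * (exp (s * (1 + d)) - 1)"
    by (simp add: algebra_simps)
  also have "\<dots> \<le> exp (s * Y) * (s * (1 + d) * (exp (s * (1 + d)) + 1) / 2)"
    using assms by (intro mult_left_mono exp_minus_one_le) auto
  finally show ?thesis by (simp add: algebra_simps)
qed

section \<open>The moment generating function of the number of isolated vertices\<close>

context
  fixes n :: nat and p :: real
  assumes n_ge_2: "n \<ge> 2" and p_nonneg: "0 \<le> p" and p_le_1: "p \<le> 1"
begin

abbreviation num_iso :: "nat set set \<Rightarrow> real" where
  "num_iso E \<equiv> real (card (isolated_vertices n E))"

abbreviation avg :: "(nat set set \<Rightarrow> real) \<Rightarrow> real" where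
  "avg f \<equiv> \<Sum>E\<in>Pow (vpairs n). bern_weight p (vpairs n) E * f E"

definition iso_mgf :: "real \<Rightarrow> real" where
  "iso_mgf s = avg (\<lambda>E. exp (s * num_iso E))"

lemma iso_mgf_derivative:
  "(iso_mgf has_real_derivative avg (\<lambda>E. num_iso E * exp (s * num_iso E))) (at s)"
  unfolding iso_mgf_def[abs_def]
  by (rule DERIV_sum) (rule derivative_eq_intros refl | simp)+

text \<open>M(s) \<ge> 1 for s \<ge> 0, so ln M is well behaved in Herbst's argument.\<close>
lemma iso_mgf_ge_1:
  assumes "0 \<le> s"
  shows "1 \<le> iso_mgf s"
proof -
  have "avg (\<lambda>_. 1) \<le> iso_mgf s"
    unfolding iso_mgf_def using assms p_nonneg p_le_1
    by (intro sum_mono mult_left_mono bern_weight_nonneg) auto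
  then show ?thesis using sum_bern_weight[OF finite_vpairs] by simp
qed

text \<open>The key estimate: deleting the star of v raises exp(sY) on average by at most the
  factor 1 + s \<gamma>_s / 2.  The increment is bounded by an increasing function of
  |E \<inter> star v| times the decreasing exp(sY), and Harris' inequality decouples them.\<close>
lemma mgf_star_deletion:
  assumes s: "0 \<le> s" and v: "v \<in> {1..n}"
  shows "avg (\<lambda>E. exp (s * num_iso (E - star n v))) \<le> (1 + s / 2 * gamma_iso n p s) * iso_mgf s"
proof -
  define f where "f B = (1 + real (card B)) * (exp (s * (1 + real (card B))) + 1)" for B :: "nat set set"
  define F where "F E = f (E \<inter> star n v)" for E
  define G where "G E = exp (s * num_iso E)" for E
  have F_avg: "avg F = gamma_iso n p s"
    unfolding F_def sum_bern_weight_restrict[OF finite_vpairs[of n] star_subset[of n v]]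
    using gamma_iso_eq_star_moment[OF finite_star card_star[OF v] n_ge_2] by (simp add: f_def)
  have harris: "avg (\<lambda>E. F E * G E) \<le> avg F * avg G"
    using harris_inequality[OF finite_vpairs[of n] p_nonneg p_le_1, of F G] unfolding mult.assoc
  proof this
    fix E E' assume "E \<subseteq> E'" "E' \<subseteq> vpairs n"
    then have "card (E \<inter> star n v) \<le> card (E' \<inter> star n v)"
      by (intro card_mono) (auto intro: finite_subset[OF _ finite_star])
    then have k: "real (card (E \<inter> star n v)) \<le> real (card (E' \<inter> star n v))" by simp
    then have "exp (s * (1 + real (card (E \<inter> star n v)))) \<le> exp (s * (1 + real (card (E' \<inter> star n v))))"
      using s by (simp add: mult_left_mono)
    then show "F E \<le> F E'"
      unfolding F_def f_def using k by (intro mult_mono add_mono) auto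
  next
    fix E E' assume "E \<subseteq> E'" "E' \<subseteq> vpairs n"
    then show "G E' \<le> G E"
      unfolding G_def using s card_isolated_antimono[of E E' n] by (simp add: mult_left_mono)
  qed
  have "avg (\<lambda>E. exp (s * num_iso (E - star n v))) - iso_mgf s
      = avg (\<lambda>E. exp (s * num_iso (E - star n v)) - exp (s * num_iso E))"
    unfolding iso_mgf_def by (simp add: sum_subtractf algebra_simps)
  also have "\<dots> \<le> avg (\<lambda>E. exp (s * num_iso E) * (s / 2 * F E))"
  proof (intro sum_mono mult_left_mono bern_weight_nonneg p_nonneg p_le_1)
    fix E assume E: "E \<in> Pow (vpairs n)"
    have "num_iso E \<le> num_iso (E - star n v)"
      using card_isolated_antimono[of "E - star n v" E n] by simp
    moreover have "num_iso (E - star n v) \<le> num_iso E + 1 + real (card (E \<inter> star n v))"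
      using card_isolated_delete_star[OF v, of E] E by simp
    ultimately show "exp (s * num_iso (E - star n v)) - exp (s * num_iso E)
        \<le> exp (s * num_iso E) * (s / 2 * F E)"
      unfolding F_def f_def by (rule exp_increment_bound[OF s])
  qed
  also have "\<dots> = s / 2 * avg (\<lambda>E. F E * G E)"
    unfolding G_def by (simp add: sum_distrib_left algebra_simps)
  also have "\<dots> \<le> s / 2 * (gamma_iso n p s * iso_mgf s)"
    using harris s unfolding F_avg G_def iso_mgf_def by (intro mult_left_mono) auto
  finally show ?thesis by (simp add: algebra_simps)
qed

lemma iso_mgf_derivative_bound:
  assumes "0 \<le> s"
  shows "avg (\<lambda>E. num_iso E * exp (s * num_iso E))
         \<le> iso_mean n p * (1 + s / 2 * gamma_iso n p s) * iso_mgf s"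
proof -
  have "avg (\<lambda>E. num_iso E * exp (s * num_iso E))
      = (\<Sum>v\<in>{1..n}. (1 - p) ^ (n - 1) * avg (\<lambda>E. exp (s * num_iso (E - star n v))))"
    by (rule isolated_size_bias)
  also have "\<dots> \<le> (\<Sum>v\<in>{1..n}. (1 - p) ^ (n - 1) * ((1 + s / 2 * gamma_iso n p s) * iso_mgf s))"
    using mgf_star_deletion[OF assms] p_le_1 by (intro sum_mono mult_left_mono) auto
  also have "\<dots> = iso_mean n p * (1 + s / 2 * gamma_iso n p s) * iso_mgf s"
    using iso_mean_eq[OF p_nonneg p_le_1] by simp
  finally show ?thesis .
qed

text \<open>Herbst's argument: integrating (ln M)' \<le> \<mu> + \<mu> \<gamma>_{s0} s / 2 over [0, s].\<close>
lemma iso_mgf_bound: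
  assumes s: "0 \<le> s" "s \<le> s0"
  shows "iso_mgf s \<le> exp (s * iso_mean n p + iso_mean n p * gamma_iso n p s0 * s\<^sup>2 / 4)"
proof -
  define \<mu> where "\<mu> = iso_mean n p"
  define g where "g = gamma_iso n p s0"
  have \<mu>_nonneg: "0 \<le> \<mu>" unfolding \<mu>_def iso_mean_eq[OF p_nonneg p_le_1] using p_le_1 by simp
  define L where "L x = ln (iso_mgf x) - x * \<mu> - \<mu> * g * x\<^sup>2 / 4" for x
  have "L s \<le> L 0"
  proof (rule DERIV_nonpos_imp_nonincreasing[OF s(1)])
    fix x assume x: "0 \<le> x" "x \<le> s"
    let ?M' = "avg (\<lambda>E. num_iso E * exp (x * num_iso E))"
    have M_ge_1: "1 \<le> iso_mgf x" using iso_mgf_ge_1[OF x(1)] .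
    have ln_deriv: "((\<lambda>x. ln (iso_mgf x)) has_real_derivative 1 / iso_mgf x * ?M') (at x)"
      by (rule DERIV_chain2[OF DERIV_ln_divide iso_mgf_derivative]) (use M_ge_1 in auto)
    have deriv: "(L has_real_derivative 1 / iso_mgf x * ?M' - \<mu> - \<mu> * g * (2 * x) / 4) (at x)"
      unfolding L_def[abs_def] by (rule derivative_eq_intros ln_deriv refl | simp)+
    have "gamma_iso n p x \<le> g"
      unfolding g_def using gamma_iso_mono[OF p_nonneg p_le_1] x s by simp
    then have "\<mu> * (1 + x / 2 * gamma_iso n p x) * iso_mgf x \<le> \<mu> * (1 + x / 2 * g) * iso_mgf x"
      using \<mu>_nonneg x M_ge_1 by (intro mult_left_mono mult_right_mono add_left_mono) auto
    then have "?M' \<le> iso_mgf x * (\<mu> + \<mu> * g * x / 2)"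
      using iso_mgf_derivative_bound[OF x(1)] unfolding \<mu>_def by (simp add: algebra_simps)
    then have "?M' / iso_mgf x \<le> \<mu> + \<mu> * g * x / 2"
      using M_ge_1 by (simp add: divide_le_eq mult.commute)
    then have "1 / iso_mgf x * ?M' - \<mu> - \<mu> * g * (2 * x) / 4 \<le> 0" by (simp add: field_simps)
    then show "\<exists>y. (L has_real_derivative y) (at x) \<and> y \<le> 0" using deriv by blast
  qed
  moreover have "L 0 = 0" unfolding L_def iso_mgf_def using sum_bern_weight[OF finite_vpairs] by simp
  ultimately have "ln (iso_mgf s) \<le> s * \<mu> + \<mu> * g * s\<^sup>2 / 4" unfolding L_def by simp
  then have "exp (ln (iso_mgf s)) \<le> exp (s * \<mu> + \<mu> * g * s\<^sup>2 / 4)" by simp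
  then show ?thesis using iso_mgf_ge_1[OF s(1)] unfolding \<mu>_def g_def by simp
qed

lemma isolated_upper_tail:
  assumes s: "0 \<le> s" "s \<le> s0"
  shows "measure_pmf.prob (ER_graph n p) {G. x \<le> real (isolated_count n G) - iso_mean n p}
         \<le> exp (- s * x + iso_mean n p * gamma_iso n p s0 * s\<^sup>2 / 4)"
proof -
  let ?\<mu> = "iso_mean n p"
  have "measure_pmf.prob (ER_graph n p) {G. x \<le> real (isolated_count n G) - ?\<mu>}
      = avg (\<lambda>E. if x \<le> num_iso E - ?\<mu> then 1 else 0)"
    using expectation_ER_graph[OF p_nonneg p_le_1,
        of n "indicator {G. x \<le> real (isolated_count n G) - ?\<mu>}"]
    by (simp add: isolated_count_graph indicator_def of_bool_def)
  also have "\<dots> \<le> avg (\<lambda>E. exp (s * num_iso E) * exp (- s * ?\<mu> - s * x))"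
  proof (intro sum_mono mult_left_mono bern_weight_nonneg p_nonneg p_le_1)
    fix E
    have "exp (s * num_iso E) * exp (- s * ?\<mu> - s * x) = exp (s * (num_iso E - ?\<mu> - x))"
      by (simp add: exp_add[symmetric] algebra_simps)
    then show "(if x \<le> num_iso E - ?\<mu> then 1 else 0) \<le> exp (s * num_iso E) * exp (- s * ?\<mu> - s * x)"
      using s by auto
  qed
  also have "\<dots> = iso_mgf s * exp (- s * ?\<mu> - s * x)"
    unfolding iso_mgf_def sum_distrib_right by (simp add: mult.assoc)
  also have "\<dots> \<le> exp (s * ?\<mu> + ?\<mu> * gamma_iso n p s0 * s\<^sup>2 / 4) * exp (- s * ?\<mu> - s * x)"
    using iso_mgf_bound[OF s] by (intro mult_right_mono) auto
  also have "\<dots> = exp (- s * x + ?\<mu> * gamma_iso n p s0 * s\<^sup>2 / 4)"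
    by (simp add: exp_add[symmetric] algebra_simps)
  finally show ?thesis .
qed

end

section \<open>Optimising the Chernoff exponent\<close>

text \<open>If q \<le> exp(-s(t\<sigma>) + c s^2/4) for all s \<in> [0, \<theta>/\<sigma>], then the best admissible s is
  the unconstrained minimiser 2t\<sigma>/c when it lies in the interval, and the endpoint
  \<theta>/\<sigma> otherwise.\<close>
lemma constrained_quadratic_exponent_bound:
  fixes q c \<sigma> t \<theta> :: real
  assumes c: "0 < c" and \<sigma>: "0 < \<sigma>" and "0 \<le> \<theta>" "0 \<le> t"
    and bound: "\<And>s. 0 \<le> s \<Longrightarrow> s \<le> \<theta> / \<sigma> \<Longrightarrow> q \<le> exp (- s * (t * \<sigma>) + c * s\<^sup>2 / 4)"
  shows "q \<le> (if t \<le> \<theta> * c / (2 * \<sigma>\<^sup>2) then exp (- (t\<^sup>2 * \<sigma>\<^sup>2 / c))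
              else exp (- \<theta> * t + c * \<theta>\<^sup>2 / (4 * \<sigma>\<^sup>2)))"
proof (cases "t \<le> \<theta> * c / (2 * \<sigma>\<^sup>2)")
  case True
  define s where "s = 2 * t * \<sigma> / c"
  have "0 \<le> s" unfolding s_def using assms by simp
  moreover have "s \<le> \<theta> / \<sigma>"
    using True c \<sigma> unfolding s_def by (simp add: field_simps power2_eq_square)
  moreover have "- s * (t * \<sigma>) + c * s\<^sup>2 / 4 = - (t\<^sup>2 * \<sigma>\<^sup>2 / c)"
    unfolding s_def using c by (simp add: field_simps power2_eq_square)
  ultimately show ?thesis using bound True by fastforce
next
  case False
  have "q \<le> exp (- (\<theta> / \<sigma>) * (t * \<sigma>) + c * (\<theta> / \<sigma>)\<^sup>2 / 4)"
    using assms by (intro bound) simp_all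
  also have "- (\<theta> / \<sigma>) * (t * \<sigma>) + c * (\<theta> / \<sigma>)\<^sup>2 / 4 = - \<theta> * t + c * \<theta>\<^sup>2 / (4 * \<sigma>\<^sup>2)"
    using \<sigma> by (simp add: field_simps power2_eq_square)
  finally show ?thesis using False by simp
qed

theorem mainTheorem2:
  fixes n :: nat and p t \<theta>\<^sub>0 :: real
  assumes "n \<ge> 2" and "0 < p" and "p < 1" and "\<theta>\<^sub>0 \<ge> 0" and "t \<ge> 0"
  defines "\<mu> \<equiv> iso_mean n p"
      and "\<sigma> \<equiv> sqrt (iso_var n p)"
  defines "\<gamma> \<equiv> gamma_iso n p (\<theta>\<^sub>0 / \<sigma>)"
  shows "measure_pmf.prob (ER_graph n p)
           {G. (real (isolated_count n G) - \<mu>) / \<sigma> \<ge> t}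
         \<le> (if t \<le> \<theta>\<^sub>0 * \<mu> * \<gamma> / (2 * \<sigma>\<^sup>2)
             then exp (- (t\<^sup>2 * \<sigma>\<^sup>2 / (\<mu> * \<gamma>)))
             else exp (- \<theta>\<^sub>0 * t + \<mu> * \<gamma> * \<theta>\<^sub>0\<^sup>2 / (4 * \<sigma>\<^sup>2)))"
proof (cases "\<sigma> = 0")
  case True
  text \<open>Degenerate normalisation: the event is certain if t = 0 (and the bound is 1),
    and empty if t > 0.\<close>
  then show ?thesis using \<open>t \<ge> 0\<close> by (cases "t = 0") (simp_all add: measure_pmf.prob_le_1)
next
  case False
  have p: "0 \<le> p" "p \<le> 1" using assms(2,3) by simp_all
  have "0 \<le> iso_var n p" unfolding iso_var_def by (rule measure_pmf.variance_positive)
  then have \<sigma>_pos: "0 < \<sigma>" using False unfolding \<sigma>_def by simp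
  have \<mu>\<gamma>_pos: "0 < \<mu> * \<gamma>"
    unfolding \<mu>_def \<gamma>_def iso_mean_eq[OF p] using assms(1,3) gamma_iso_pos[OF p] by simp
  have event: "{G. (real (isolated_count n G) - \<mu>) / \<sigma> \<ge> t}
      = {G. t * \<sigma> \<le> real (isolated_count n G) - \<mu>}"
    using \<sigma>_pos by (simp add: pos_le_divide_eq)
  have "measure_pmf.prob (ER_graph n p) {G. t * \<sigma> \<le> real (isolated_count n G) - \<mu>}
      \<le> exp (- s * (t * \<sigma>) + \<mu> * \<gamma> * s\<^sup>2 / 4)" if "0 \<le> s" "s \<le> \<theta>\<^sub>0 / \<sigma>" for s
    unfolding \<mu>_def \<gamma>_def using that by (rule isolated_upper_tail[OF assms(1) p])
  then have "measure_pmf.prob (ER_graph n p) {G. t * \<sigma> \<le> real (isolated_count n G) - \<mu>}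
      \<le> (if t \<le> \<theta>\<^sub>0 * (\<mu> * \<gamma>) / (2 * \<sigma>\<^sup>2) then exp (- (t\<^sup>2 * \<sigma>\<^sup>2 / (\<mu> * \<gamma>)))
          else exp (- \<theta>\<^sub>0 * t + \<mu> * \<gamma> * \<theta>\<^sub>0\<^sup>2 / (4 * \<sigma>\<^sup>2)))"
    by (rule constrained_quadratic_exponent_bound[OF \<mu>\<gamma>_pos \<sigma>_pos assms(4,5)])
  then show ?thesis unfolding event by (simp add: mult.assoc)
qed

end
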